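(* Let $f:\mathbb{N}\to\mathbb{R}$ with $f(1)=1$ be multiplicative, i.e. $f(mn)=f(m)f(n)$ for all coprime $m,n$. Assume there exist $C>0$ and $\gamma\in\mathbb{R}$ such that $|f(n)|\leq C n^\gamma$ for all $n\geq2$. Then $$|f^{-1}(n)| \leq \left(\frac{C}{C+1}\right)^{\omega(n)} (C+1)^{\Omega(n)} n^{\gamma}, \quad n\geq 2.$$
   Context: $f^{-1}$ denotes the Dirichlet inverse of $f$: the arithmetic function with $\sum_{d\mid n} f(n/d) f^{-1}(d)=\varepsilon(n)$ for all $n$, where $\varepsilon(1)=1$ and $\varepsilon(n)=0$ for $n\ge2$. $\omega(n)$ is the number of distinct prime factors of $n$ and $\Omega(n)$ the number of prime factors counted with multiplicity. *)

theory Defs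
  imports "HOL-Computational_Algebra.Primes" Complex_Main
begin

definition dirichlet_eps :: "nat \<Rightarrow> real" where
  "dirichlet_eps n = (if n = 1 then 1 else 0)"

definition is_dirichlet_inverse :: "(nat \<Rightarrow> real) \<Rightarrow> (nat \<Rightarrow> real) \<Rightarrow> bool" where
  "is_dirichlet_inverse f g \<longleftrightarrow>
     (\<forall>n>0. (\<Sum>d | d dvd n. f (n div d) * g d) = dirichlet_eps n)"

definition multiplicative_fn :: "(nat \<Rightarrow> real) \<Rightarrow> bool" where
  "multiplicative_fn f \<longleftrightarrow> f 1 = 1 \<and>
     (\<forall>m n. m > 0 \<longrightarrow> n > 0 \<longrightarrow> coprime m n \<longrightarrow> f (m * n) = f m * f n)"

definition omega_fn :: "nat \<Rightarrow> nat" where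
  "omega_fn n = card (prime_factors n)"

definition Omega_fn :: "nat \<Rightarrow> nat" where
  "Omega_fn n = size (prime_factorization n)"

end

theory Submission
  imports Defs
begin

text \<open>The Dirichlet inverse g of a multiplicative f is again multiplicative, and so is the
  bound B(n) = (C/(C+1))^\<omega>(n) (C+1)^\<Omega>(n) n^\<gamma>; hence it suffices to check the bound
  on prime powers. There g(p^k) = -\<Sum>_{i<k} f(p^(k-i)) g(p^i), so x_i = |g(p^i)|/p^(i\<gamma>)
  satisfies x_0 = 1 and x_k \<le> C (x_0 + ... + x_(k-1)); the partial sums therefore grow at
  most like (1+C)^k, which gives |g(p^k)| \<le> C (C+1)^(k-1) p^(k\<gamma>) = B(p^k).\<close>

lemma dirichlet_inverse_at_1:
  assumes "f 1 = 1" and "is_dirichlet_inverse f g"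
  shows "g 1 = 1"
  using assms(2)[unfolded is_dirichlet_inverse_def, rule_format, of 1] assms(1)
  by (simp add: dirichlet_eps_def)

lemma dirichlet_inverse_sum_eq_0:
  assumes "is_dirichlet_inverse f g" and "n > 1"
  shows "(\<Sum>d | d dvd n. f (n div d) * g d) = 0"
  using assms(1)[unfolded is_dirichlet_inverse_def, rule_format, of n] assms(2)
  by (simp add: dirichlet_eps_def)

lemma sum_divisors_mult_coprime:
  fixes m n :: nat
  assumes "coprime m n" and "m > 0" and "n > 0"
  shows "(\<Sum>d | d dvd m * n. F d) = (\<Sum>(a, b) \<in> {a. a dvd m} \<times> {b. b dvd n}. F (a * b))"
proof -
  have inj: "inj_on (\<lambda>(a, b). a * b) ({a. a dvd m} \<times> {b. b dvd n})"
  proof (rule inj_onI, clarsimp)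
    fix a b a' b' :: nat
    assume dvd: "a dvd m" "b dvd n" "a' dvd m" "b' dvd n" and eq: "a * b = a' * b'"
    have "a dvd a'"
      using dvd eq assms(1) by (metis coprime_divisors coprime_dvd_mult_left_iff dvd_triv_left)
    moreover have "a' dvd a"
      using dvd eq assms(1) by (metis coprime_divisors coprime_dvd_mult_left_iff dvd_triv_left)
    ultimately have "a = a'" by (rule dvd_antisym)
    moreover have "a > 0" using dvd assms(2) by (auto intro: dvd_pos_nat)
    ultimately show "a = a' \<and> b = b'" using eq by simp
  qed
  have image: "(\<lambda>(a, b). a * b) ` ({a. a dvd m} \<times> {b. b dvd n}) = {d. d dvd m * n}"
    by (auto intro: mult_dvd_mono elim!: dvd_productE)
  show ?thesis
    using sum.reindex[OF inj, of F] image by (simp add: case_prod_unfold)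
qed

lemma sum_divisors_mult_coprime_multiplicative:
  assumes f: "multiplicative_fn f" and "coprime m n" and "m > 0" and "n > 0"
  shows "(\<Sum>d | d dvd m * n. f (m * n div d) * u d) =
    (\<Sum>(a, b) \<in> {a. a dvd m} \<times> {b. b dvd n}. f (m div a) * f (n div b) * u (a * b))"
  unfolding sum_divisors_mult_coprime[OF assms(2-4)]
proof (intro sum.cong refl, clarify)
  fix a b assume "a dvd m" "b dvd n"
  then have "coprime (m div a) (n div b)"
    using \<open>coprime m n\<close> by (metis coprime_mult_left_iff coprime_mult_right_iff dvd_div_mult_self)
  moreover have "m div a > 0" "n div b > 0" and "m * n div (a * b) = m div a * (n div b)"
    using \<open>a dvd m\<close> \<open>b dvd n\<close> assms(3,4) by (auto simp: div_mult_div_if_dvd dvd_div_eq_0_iff)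
  ultimately show "f (m * n div (a * b)) * u (a * b) = f (m div a) * f (n div b) * u (a * b)"
    using f by (simp add: multiplicative_fn_def)
qed

lemma mult_less_mult_of_dvd:
  fixes a b m n :: nat
  assumes "a dvd m" and "b dvd n" and "m > 0" and "n > 0" and "(a, b) \<noteq> (m, n)"
  shows "a * b < m * n"
proof -
  have "a > 0" "b > 0" "a \<le> m" "b \<le> n"
    using assms by (auto intro: dvd_pos_nat dvd_imp_le)
  then show ?thesis
    using assms(5) by (auto intro: mult_less_le_imp_less mult_le_less_imp_less)
qed

lemma multiplicative_fn_dirichlet_inverse:
  assumes f: "multiplicative_fn f" and inv: "is_dirichlet_inverse f g"
  shows "multiplicative_fn g"
proof -
  have f1: "f 1 = 1" and g1: "g 1 = 1"
    using f dirichlet_inverse_at_1[OF _ inv] by (simp_all add: multiplicative_fn_def)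
  have "g (m * n) = g m * g n" if "coprime m n" "m > 0" "n > 0" for m n
    using that
  proof (induction "m * n" arbitrary: m n rule: less_induct)
    case less
    show ?case
    proof (cases "m = 1 \<or> n = 1")
      case True
      then show ?thesis using g1 by auto
    next
      case False
      with less.prems have "m > 1" "n > 1" by auto
      define D where "D = {a. a dvd m} \<times> {b. b dvd n}"
      define S where "S u = (\<Sum>(a, b) \<in> D. f (m div a) * f (n div b) * u a b)" for u
      have "S (\<lambda>a b. g (a * b)) = 0"
        using dirichlet_inverse_sum_eq_0[OF inv less_1_mult[OF \<open>m > 1\<close> \<open>n > 1\<close>]]
        by (simp add: S_def D_def sum_divisors_mult_coprime_multiplicative[OF f less.prems])
      also have "0 = (\<Sum>a | a dvd m. f (m div a) * g a) * (\<Sum>b | b dvd n. f (n div b) * g b)"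
        using dirichlet_inverse_sum_eq_0[OF inv \<open>m > 1\<close>] by simp
      also have "\<dots> = S (\<lambda>a b. g a * g b)"
        unfolding S_def D_def sum_product sum.cartesian_product by (simp add: mult_ac)
      finally have S_eq: "S (\<lambda>a b. g (a * b)) = S (\<lambda>a b. g a * g b)" .
      have IH: "g (a * b) = g a * g b" if "(a, b) \<in> D - {(m, n)}" for a b
      proof (rule less.hyps)
        from that have "a dvd m" "b dvd n" "(a, b) \<noteq> (m, n)" by (auto simp: D_def)
        with less.prems show "a * b < m * n" "a > 0" "b > 0" "coprime a b"
          by (auto intro: mult_less_mult_of_dvd dvd_pos_nat coprime_divisors)
      qed
      have "finite D" "(m, n) \<in> D"
        using less.prems by (auto simp: D_def)
      txt \<open>By the induction hypothesis the two sums agree termwise except at (m, n).\<close>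
      with S_eq show ?thesis
        unfolding S_def sum.remove[OF \<open>finite D\<close> \<open>(m, n) \<in> D\<close>] using IH less.prems f1
        by (simp add: case_prod_unfold)
    qed
  qed
  with g1 show ?thesis by (simp add: multiplicative_fn_def)
qed

lemma multiplicative_fn_prod_prime_powers:
  assumes g: "multiplicative_fn g" and "finite P" and "\<And>p. p \<in> P \<Longrightarrow> prime p"
  shows "g (\<Prod>p\<in>P. p ^ e p) = (\<Prod>p\<in>P. g (p ^ e p))"
  using assms(2,3)
proof (induction P rule: finite_induct)
  case empty
  then show ?case using g by (simp add: multiplicative_fn_def)
next
  case (insert p P)
  have "coprime p q" if "q \<in> P" for q
    using insert that by (metis insertCI primes_coprime)
  then have "coprime (p ^ e p) (\<Prod>q\<in>P. q ^ e q)"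
    by (simp add: prod_coprime_right)
  moreover have "(\<Prod>q\<in>P. q ^ e q) > 0" "p ^ e p > 0"
    using insert by (auto intro!: prod_pos simp: prime_gt_0_nat)
  ultimately show ?case
    using insert g by (simp add: multiplicative_fn_def)
qed

lemma multiplicative_fn_prime_factorization:
  assumes "multiplicative_fn g" and "n > 0"
  shows "g n = (\<Prod>p\<in>prime_factors n. g (p ^ multiplicity p n))"
  using multiplicative_fn_prod_prime_powers[OF assms(1), of "prime_factors n" "\<lambda>p. multiplicity p n"]
    prod_prime_factors[of n] assms(2) by (simp add: in_prime_factors_imp_prime)

lemma multiplicative_fn_abs_le:
  assumes "multiplicative_fn g" and "multiplicative_fn h"
    and "\<And>p k. prime p \<Longrightarrow> k > 0 \<Longrightarrow> \<bar>g (p ^ k)\<bar> \<le> h (p ^ k)"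
    and "n > 0"
  shows "\<bar>g n\<bar> \<le> h n"
proof -
  have "\<bar>g n\<bar> = (\<Prod>p\<in>prime_factors n. \<bar>g (p ^ multiplicity p n)\<bar>)"
    using multiplicative_fn_prime_factorization[OF assms(1,4)] by (simp add: abs_prod)
  also have "\<dots> \<le> (\<Prod>p\<in>prime_factors n. h (p ^ multiplicity p n))"
    using assms(3) by (intro prod_mono) (auto simp: prime_factors_multiplicity)
  also have "\<dots> = h n"
    using multiplicative_fn_prime_factorization[OF assms(2,4)] by simp
  finally show ?thesis .
qed

lemma dirichlet_inverse_prime_power:
  assumes "f 1 = 1" and inv: "is_dirichlet_inverse f g" and p: "prime p" and "k > 0"
  shows "g (p ^ k) = - (\<Sum>i<k. f (p ^ (k - i)) * g (p ^ i))"
proof -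
  have p1: "p > 1" using p by (rule prime_gt_1_nat)
  have inj: "inj_on ((^) p) {..k}" and image: "(^) p ` {..k} = {d. d dvd p ^ k}"
    using p1 divides_primepow_nat[OF p] by (auto intro!: inj_onI simp: power_inject_exp)
  have "(\<Sum>d | d dvd p ^ k. f (p ^ k div d) * g d) = (\<Sum>i\<le>k. f (p ^ k div p ^ i) * g (p ^ i))"
    using sum.reindex[OF inj, of "\<lambda>d. f (p ^ k div d) * g d"] image by simp
  also have "\<dots> = (\<Sum>i\<le>k. f (p ^ (k - i)) * g (p ^ i))"
    using p1 by (intro sum.cong refl) (simp add: power_diff)
  also have "\<dots> = (\<Sum>i<k. f (p ^ (k - i)) * g (p ^ i)) + g (p ^ k)"
    using \<open>f 1 = 1\<close> by (simp add: lessThan_Suc_atMost[symmetric])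
  finally show ?thesis
    using dirichlet_inverse_sum_eq_0[OF inv one_less_power[OF p1 \<open>k > 0\<close>]] by simp
qed

lemma partial_sums_le_power:
  fixes x :: "nat \<Rightarrow> real"
  assumes "x 0 \<le> 1" and "c \<ge> 0" and "\<And>k. k > 0 \<Longrightarrow> x k \<le> c * (\<Sum>i<k. x i)"
  shows "(\<Sum>i\<le>k. x i) \<le> (1 + c) ^ k"
proof (induction k)
  case 0
  then show ?case using assms(1) by simp
next
  case (Suc k)
  have "(\<Sum>i\<le>Suc k. x i) \<le> (1 + c) * (\<Sum>i\<le>k. x i)"
    using assms(3)[of "Suc k"] by (simp add: lessThan_Suc_atMost algebra_simps)
  also have "\<dots> \<le> (1 + c) ^ Suc k"
    using Suc assms(2) by (simp add: mult_left_mono)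
  finally show ?case .
qed

lemma dirichlet_inverse_prime_power_abs_le:
  fixes \<gamma> :: real
  assumes "f 1 = 1" and "is_dirichlet_inverse f g"
    and f_bound: "\<And>n. n \<ge> 2 \<Longrightarrow> \<bar>f n\<bar> \<le> C * real n powr \<gamma>"
    and p: "prime p" and "k > 0"
  shows "\<bar>g (p ^ k)\<bar> \<le> (\<Sum>i<k. C * real (p ^ (k - i)) powr \<gamma> * \<bar>g (p ^ i)\<bar>)"
proof -
  have "\<bar>g (p ^ k)\<bar> = \<bar>\<Sum>i<k. f (p ^ (k - i)) * g (p ^ i)\<bar>"
    by (simp add: dirichlet_inverse_prime_power[OF assms(1,2) p \<open>k > 0\<close>])
  also have "\<dots> \<le> (\<Sum>i<k. \<bar>f (p ^ (k - i))\<bar> * \<bar>g (p ^ i)\<bar>)"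
    unfolding abs_mult[symmetric] by (rule sum_abs)
  also have "\<dots> \<le> (\<Sum>i<k. C * real (p ^ (k - i)) powr \<gamma> * \<bar>g (p ^ i)\<bar>)"
  proof (intro sum_mono mult_right_mono)
    fix i assume "i \<in> {..<k}"
    then have "p ^ 1 \<le> p ^ (k - i)"
      using prime_gt_1_nat[OF p] by (intro power_increasing) auto
    then have "p ^ (k - i) \<ge> 2"
      using prime_ge_2_nat[OF p] by simp
    then show "\<bar>f (p ^ (k - i))\<bar> \<le> C * real (p ^ (k - i)) powr \<gamma>"
      by (rule f_bound)
  qed simp
  finally show ?thesis .
qed

lemma dirichlet_inverse_prime_power_bound:
  fixes \<gamma> :: real
  assumes "f 1 = 1" and inv: "is_dirichlet_inverse f g" and "C \<ge> 0"
    and f_bound: "\<And>n. n \<ge> 2 \<Longrightarrow> \<bar>f n\<bar> \<le> C * real n powr \<gamma>"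
    and p: "prime p" and "k > 0"
  shows "\<bar>g (p ^ k)\<bar> \<le> C * (1 + C) ^ (k - 1) * real (p ^ k) powr \<gamma>"
proof -
  define w where "w i = real (p ^ i) powr \<gamma>" for i
  define x where "x i = \<bar>g (p ^ i)\<bar> / w i" for i
  have w_pos: "w i > 0" for i
    using p by (simp add: w_def prime_gt_0_nat)
  have w_add: "w (i + j) = w i * w j" for i j
    by (simp add: w_def power_add powr_mult)
  have "x 0 = 1"
    using dirichlet_inverse_at_1[OF \<open>f 1 = 1\<close> inv] by (simp add: x_def w_def)
  have x_step: "x j \<le> C * (\<Sum>i<j. x i)" if "j > 0" for j
  proof -
    have "\<bar>g (p ^ j)\<bar> \<le> (\<Sum>i<j. C * w (j - i) * \<bar>g (p ^ i)\<bar>)"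
      unfolding w_def by (rule dirichlet_inverse_prime_power_abs_le[OF assms(1,2) f_bound p that])
    also have "\<dots> = C * w j * (\<Sum>i<j. x i)"
      unfolding sum_distrib_left
    proof (intro sum.cong refl)
      fix i assume "i \<in> {..<j}"
      then have "w j = w (j - i) * w i" by (simp flip: w_add)
      then show "C * w (j - i) * \<bar>g (p ^ i)\<bar> = C * w j * x i"
        using w_pos[of i] by (simp add: x_def)
    qed
    finally show ?thesis
      using w_pos[of j] by (simp add: x_def pos_divide_le_eq mult_ac)
  qed
  have "(\<Sum>i\<le>k - 1. x i) \<le> (1 + C) ^ (k - 1)"
    using \<open>x 0 = 1\<close> \<open>C \<ge> 0\<close> x_step by (intro partial_sums_le_power) auto
  then have "(\<Sum>i<k. x i) \<le> (1 + C) ^ (k - 1)"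
    using \<open>k > 0\<close> by (simp add: lessThan_Suc_atMost[symmetric])
  then have "x k \<le> C * (1 + C) ^ (k - 1)"
    using x_step[OF \<open>k > 0\<close>] \<open>C \<ge> 0\<close> by (meson mult_left_mono order_trans)
  then show ?thesis
    using w_pos[of k] by (simp add: x_def w_def pos_divide_le_eq)
qed

lemma Omega_fn_mult:
  assumes "m > 0" and "n > 0"
  shows "Omega_fn (m * n) = Omega_fn m + Omega_fn n"
  using assms by (simp add: Omega_fn_def prime_factorization_mult)

lemma omega_fn_mult_coprime:
  assumes "coprime m n" and "m > 0" and "n > 0"
  shows "omega_fn (m * n) = omega_fn m + omega_fn n"
proof -
  have "prime_factors m \<inter> prime_factors n = {}"
    using assms prime_factors_gcd[of m n] by simp
  then show ?thesis
    using assms by (simp add: omega_fn_def prime_factors_product card_Un_disjoint)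
qed

lemma omega_fn_prime_power:
  assumes "prime p" and "k > 0"
  shows "omega_fn (p ^ k) = 1"
  using assms by (simp add: omega_fn_def prime_factorization_prime_power)

lemma Omega_fn_prime_power:
  assumes "prime p"
  shows "Omega_fn (p ^ k) = k"
  using assms by (simp add: Omega_fn_def prime_factorization_prime_power)

lemma multiplicative_fn_omega_Omega_powr:
  fixes a b \<gamma> :: real
  shows "multiplicative_fn (\<lambda>n. a ^ omega_fn n * b ^ Omega_fn n * real n powr \<gamma>)"
proof -
  have "omega_fn 1 = 0" and "Omega_fn 1 = 0"
    by (simp_all add: omega_fn_def Omega_fn_def)
  then show ?thesis
    by (simp add: multiplicative_fn_def omega_fn_mult_coprime Omega_fn_mult power_add powr_mult)
qed

theorem proposition3p2:
  fixes f g :: "nat \<Rightarrow> real" and C \<gamma> :: real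
  assumes "multiplicative_fn f"
    and "C > 0"
    and "\<And>n. n \<ge> 2 \<Longrightarrow> \<bar>f n\<bar> \<le> C * real n powr \<gamma>"
    and "is_dirichlet_inverse f g"
    and "n \<ge> 2"
  shows "\<bar>g n\<bar> \<le> (C / (C + 1)) ^ omega_fn n * (C + 1) ^ Omega_fn n * real n powr \<gamma>"
proof (rule multiplicative_fn_abs_le)
  show "multiplicative_fn g"
    using assms(1,4) by (rule multiplicative_fn_dirichlet_inverse)
  show "multiplicative_fn (\<lambda>n. (C / (C + 1)) ^ omega_fn n * (C + 1) ^ Omega_fn n * real n powr \<gamma>)"
    by (rule multiplicative_fn_omega_Omega_powr)
  fix p k :: nat
  assume "prime p" and "k > 0"
  have "\<bar>g (p ^ k)\<bar> \<le> C * (1 + C) ^ (k - 1) * real (p ^ k) powr \<gamma>"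
    using assms(1-4) \<open>prime p\<close> \<open>k > 0\<close>
    by (intro dirichlet_inverse_prime_power_bound) (auto simp: multiplicative_fn_def)
  also have "C * (1 + C) ^ (k - 1) = C / (C + 1) * (C + 1) ^ k"
    using \<open>C > 0\<close> \<open>k > 0\<close> by (cases k) (simp_all add: field_simps)
  finally show "\<bar>g (p ^ k)\<bar> \<le>
      (C / (C + 1)) ^ omega_fn (p ^ k) * (C + 1) ^ Omega_fn (p ^ k) * real (p ^ k) powr \<gamma>"
    using \<open>prime p\<close> \<open>k > 0\<close> by (simp add: omega_fn_prime_power Omega_fn_prime_power)
qed (use assms(5) in simp)

end
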